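(* Let $n\ge 1$, $m\ge 1$, and let $\lambda=(\lambda_1,\ldots,\lambda_n)\in\mathbb{R}_{<0}^n$ (not necessarily distinct). Consider the $n$-th order linear system $$x^{(n)}=-\kappa_{0,\lambda}x^{(0)}-\kappa_{1,\lambda}x^{(1)}-\cdots-\kappa_{n-1,\lambda}x^{(n-1)},\qquad x(t)\in\mathbb{R}^m,$$ whose characteristic polynomial $s^n+\sum_{k=0}^{n-1}\kappa_{k,\lambda}s^k$ has roots $\lambda_1,\ldots,\lambda_n$. Let $x(t)$ be its solution starting at $t=0$ from an arbitrary initial state $(x^{(0)}_0,\ldots,x^{(n-1)}_0)\in\mathbb{R}^{n\times m}$. Let $\lambda_{\neg\max}$ be the $(n-1)$-tuple obtained from $\lambda$ by removing one entry equal to $\max(\lambda_1,\ldots,\lambda_n)$. Then for all $t\ge 0$, $$x(t)\in\operatorname{conv}\left\{\sum_{j=0}^{i-1}\frac{\kappa_{j,\lambda_{\neg\max}}}{\kappa_{0,\lambda_{\neg\max}}}x^{(j)}_0 \;:\; i=0,1,\ldots,n\right\},$$ i.e. $x(t)$ lies in the convex hull of $0,\ x^{(0)}_0,\ x^{(0)}_0+\frac{\kappa_{1,\lambda_{\neg\max}}}{\kappa_{0,\lambda_{\neg\max}}}x^{(1)}_0,\ \ldots,\ \sum_{j=0}^{n-1}\frac{\kappa_{j,\lambda_{\neg\max}}}{\kappa_{0,\lambda_{\neg\max}}}x^{(j)}_0$.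
   Context: $x^{(k)}$ denotes the $k$-th time derivative of $x$. For a finite tuple $\mu=(\mu_1,\ldots,\mu_p)$ of complex numbers (possibly empty, $p=0$), the companion coefficients are $\kappa_{k,\mu}=(-1)^{p-k}\sum_{I\subseteq\{1,\ldots,p\},\,|I|=p-k}\prod_{i\in I}\mu_i$ for $0\le k\le p$ (empty sum $=0$, empty product $=1$), so that $\prod_{i=1}^p(s-\mu_i)=\sum_{k=0}^{p}\kappa_{k,\mu}s^k$ and $\kappa_{p,\mu}=1$; also $\kappa_{k,\mu}=0$ for $k\notin\{0,\ldots,p\}$. An empty sum of vectors is $0$. $\operatorname{conv}$ denotes convex hull. *)

theory Defs
  imports "HOL-Analysis.Analysis"
begin

text \<open>Companion coefficients of a tuple mu = (mu_1,...,mu_p) given as a list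
(0-based indices): the coefficient of s^k in prod_i (s - mu_i).\<close>
definition kappa :: "nat \<Rightarrow> 'a::comm_ring_1 list \<Rightarrow> 'a" where
  "kappa k mu = (if k \<le> length mu then
     (-1) ^ (length mu - k) *
       (\<Sum>I\<in>{I. I \<subseteq> {0..<length mu} \<and> card I = length mu - k}. \<Prod>i\<in>I. mu ! i)
   else 0)"

text \<open>X is the family of derivatives x^(0), ..., x^(n) of a solution on [0, inf)
of x^(n) = - sum_{k<n} kappa_k x^(k), with initial data x0 0, ..., x0 (n-1).\<close>
definition is_solution ::
  "real list \<Rightarrow> (nat \<Rightarrow> 'a::real_normed_vector) \<Rightarrow> (nat \<Rightarrow> real \<Rightarrow> 'a) \<Rightarrow> bool" where
  "is_solution lam x0 X \<longleftrightarrow>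
     (\<forall>k<length lam. \<forall>t\<ge>0. (X k has_vector_derivative X (Suc k) t) (at t within {0..})) \<and>
     (\<forall>t\<ge>0. X (length lam) t = - (\<Sum>k<length lam. kappa k lam *\<^sub>R X k t)) \<and>
     (\<forall>k<length lam. X k 0 = x0 k)"

end

(*
  Peel off the roots one at a time. If X solves the system with roots m # mu, then
  W = X' - m X solves the system with roots mu and initial data x0 (k + 1) - m x0 k,
  and X' = (-m) ((-1/m) W - X): X relaxes towards the moving target (-1/m) W.
  A relaxation towards a target that stays in a closed convex set stays in that set
  (separate by a hyperplane and use an integrating factor). Inductively W stays in the
  convex hull of its own vertices, and since the companion coefficients of
  (s - m) p(s) are obtained from those of p by a shift, each (-1/m)-scaled vertex
  of W lies on the segment between two consecutive vertices of X. The induction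
  ends with one root a, where X decays inside the segment from x0 0 to 0. Any
  root may play the part of a; the theorem removes a largest one.
*)

theory Submission
  imports Defs "HOL-Computational_Algebra.Polynomial"
begin

definition poly_of_roots :: "'a::comm_ring_1 list \<Rightarrow> 'a poly" where
  "poly_of_roots mu = (\<Prod>m\<leftarrow>mu. [:- m, 1:])"

lemma coeff_prod_linear_factors:
  fixes c :: "'i \<Rightarrow> 'a::comm_ring_1"
  assumes "finite A"
  shows "coeff (\<Prod>i\<in>A. [:c i, 1:]) k = (\<Sum>B | B \<subseteq> A \<and> card B + k = card A. \<Prod>i\<in>B. c i)"
proof -
  have "(\<Prod>i\<in>A. [:c i, 1:]) = (\<Prod>i\<in>A. [:c i:] + monom 1 1)"
    by (simp add: monom_altdef)
  also have "\<dots> = (\<Sum>B\<in>Pow A. (\<Prod>i\<in>B. [:c i:]) * (\<Prod>i\<in>A - B. monom 1 1))"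
    by (rule prod_add[OF assms])
  also have "\<dots> = (\<Sum>B\<in>Pow A. monom (\<Prod>i\<in>B. c i) (card (A - B)))"
  proof (rule sum.cong[OF refl])
    fix B assume "B \<in> Pow A"
    then have "finite B" using assms by (auto intro: finite_subset)
    then have "(\<Prod>i\<in>B. [:c i:]) = [:\<Prod>i\<in>B. c i:]"
      by (induction B rule: finite_induct) auto
    then show "(\<Prod>i\<in>B. [:c i:]) * (\<Prod>i\<in>A - B. monom 1 1) = monom (\<Prod>i\<in>B. c i) (card (A - B))"
      by (simp add: monom_altdef)
  qed
  finally have "coeff (\<Prod>i\<in>A. [:c i, 1:]) k = (\<Sum>B | B \<in> Pow A \<and> card (A - B) = k. \<Prod>i\<in>B. c i)"
    using assms by (simp add: coeff_sum coeff_monom sum.inter_filter[symmetric])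
  also have "{B. B \<in> Pow A \<and> card (A - B) = k} = {B. B \<subseteq> A \<and> card B + k = card A}"
    using assms by (auto simp: card_Diff_subset finite_subset card_mono)
  finally show ?thesis .
qed

lemma kappa_eq_coeff: "kappa k mu = coeff (poly_of_roots mu) k"
proof -
  let ?n = "length mu"
  have "poly_of_roots mu = (\<Prod>i\<in>{0..<?n}. [:- (mu ! i), 1:])"
    unfolding poly_of_roots_def prod.list_conv_set_nth by simp
  then have "coeff (poly_of_roots mu) k = (\<Sum>I | I \<subseteq> {0..<?n} \<and> card I + k = ?n. \<Prod>i\<in>I. - (mu ! i))"
    by (simp add: coeff_prod_linear_factors)
  also have "\<dots> = kappa k mu"
  proof (cases "k \<le> ?n")
    case True
    then have "{I. I \<subseteq> {0..<?n} \<and> card I + k = ?n} = {I. I \<subseteq> {0..<?n} \<and> card I = ?n - k}"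
      by auto
    with True show ?thesis
      by (auto simp: kappa_def prod_uminus sum_distrib_left intro: sum.cong)
  qed (auto simp: kappa_def)
  finally show ?thesis ..
qed

lemma kappa_mset_eq:
  assumes "mset mu = mset nu"
  shows "kappa k mu = kappa k nu"
proof -
  have "poly_of_roots xs = (\<Prod>m\<in>#mset xs. [:- m, 1:])" for xs :: "'a list"
    unfolding poly_of_roots_def by (metis mset_map prod_mset_prod_list)
  then show ?thesis by (simp add: kappa_eq_coeff assms)
qed

lemma kappa_Cons_0 [simp]: "kappa 0 (m # mu) = - m * kappa 0 mu"
  by (simp add: kappa_eq_coeff poly_of_roots_def coeff_pCons)

lemma kappa_Cons_Suc [simp]: "kappa (Suc k) (m # mu) = kappa k mu - m * kappa (Suc k) mu"
  by (simp add: kappa_eq_coeff poly_of_roots_def coeff_pCons algebra_simps)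

lemma kappa_length [simp]: "kappa (length mu) mu = 1"
proof -
  have "{I. I \<subseteq> {0..<length mu} \<and> card I = 0} = {{}}"
    by (auto intro: finite_subset simp: card_eq_0_iff)
  then show ?thesis by (simp add: kappa_def)
qed

lemma kappa_0_Nil [simp]: "kappa 0 [] = 1"
  using kappa_length[of "[]"] by simp

lemma kappa_beyond_length: "length mu < k \<Longrightarrow> kappa k mu = 0"
  by (simp add: kappa_def)

lemma kappa_pos:
  fixes mu :: "real list"
  assumes "\<forall>l\<in>set mu. l < 0" and "k \<le> length mu"
  shows "kappa k mu > 0"
  using assms
proof (induction mu arbitrary: k)
  case Nil
  then show ?case by simp
next
  case (Cons m mu)
  show ?case
  proof (cases k)
    case 0
    with Cons show ?thesis by (simp add: mult_neg_pos)
  next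
    case (Suc j)
    have "kappa j mu > 0" using Cons Suc by simp
    moreover have "- m * kappa k mu \<ge> 0"
      using Cons.IH[of k] Cons.prems kappa_beyond_length[of mu k]
      by (cases "k \<le> length mu") (auto simp: mult_nonpos_nonneg less_imp_le)
    ultimately show ?thesis using Suc by simp
  qed
qed

lemma kappa_nonneg:
  fixes mu :: "real list"
  assumes "\<forall>l\<in>set mu. l < 0"
  shows "kappa k mu \<ge> 0"
  using kappa_pos[OF assms, of k] kappa_beyond_length[of mu k] by (cases "k \<le> length mu") auto

lemma sum_kappa_Cons:
  fixes y :: "nat \<Rightarrow> 'a::real_vector"
  shows "(\<Sum>j\<le>i. kappa j (m # mu) *\<^sub>R y j)
    = (\<Sum>j<i. kappa j mu *\<^sub>R (y (Suc j) - m *\<^sub>R y j)) - (m * kappa i mu) *\<^sub>R y i"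
  by (induction i) (simp_all add: algebra_simps)

lemma relaxation_ge_lower_bound:
  fixes y g :: "real \<Rightarrow> real"
  assumes "c \<ge> 0"
    and deriv: "\<And>s. s \<ge> 0 \<Longrightarrow> (y has_real_derivative c * (g s - y s)) (at s within {0..})"
    and g_ge: "\<And>s. s \<ge> 0 \<Longrightarrow> g s \<ge> b"
    and "y 0 \<ge> b" and "t \<ge> 0"
  shows "y t \<ge> b"
proof -
  define h where "h s = exp (c * s) * (y s - b)" for s
  define h' where "h' s = exp (c * s) * c * (g s - b)" for s
  have "\<exists>s\<in>{0..t}. h t - h 0 = h' s * (t - 0)"
  proof (rule mvt_very_simple[OF \<open>t \<ge> 0\<close>])
    fix s :: real assume "0 \<le> s" "s \<le> t"
    have "(h has_real_derivative h' s) (at s within {0..})"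
      unfolding h_def h'_def
      by (rule derivative_eq_intros deriv[OF \<open>0 \<le> s\<close>] refl | simp add: algebra_simps)+
    then have "(h has_real_derivative h' s) (at s within {0..t})" by (rule DERIV_subset) auto
    then show "(h has_derivative (\<lambda>z. h' s * z)) (at s within {0..t})"
      by (simp add: has_field_derivative_def)
  qed
  then obtain s where "s \<in> {0..t}" "h t - h 0 = h' s * t" by auto
  moreover have "h' s \<ge> 0"
    using \<open>c \<ge> 0\<close> g_ge[of s] \<open>s \<in> {0..t}\<close> by (simp add: h'_def)
  ultimately have "h t \<ge> h 0" using \<open>t \<ge> 0\<close> by (metis diff_ge_0_iff_ge mult_nonneg_nonneg)
  moreover have "h 0 \<ge> 0" using \<open>y 0 \<ge> b\<close> by (simp add: h_def)
  ultimately have "exp (c * t) * (y t - b) \<ge> 0" by (simp add: h_def)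
  then show ?thesis by (simp add: zero_le_mult_iff)
qed

lemma relaxation_stays_in_closed_convex:
  fixes x p :: "real \<Rightarrow> 'a::{real_inner,heine_borel}"
  assumes "c \<ge> 0" and "closed K" and "convex K" and "x 0 \<in> K"
    and target: "\<And>s. s \<ge> 0 \<Longrightarrow> p s \<in> K"
    and deriv: "\<And>s. s \<ge> 0 \<Longrightarrow> (x has_vector_derivative c *\<^sub>R (p s - x s)) (at s within {0..})"
    and "t \<ge> 0"
  shows "x t \<in> K"
proof (rule ccontr)
  assume "x t \<notin> K"
  then obtain a b where sep: "inner a (x t) < b" "\<forall>z\<in>K. inner a z > b"
    using separating_hyperplane_closed_point \<open>convex K\<close> \<open>closed K\<close> by blast
  have "inner a (x t) \<ge> b"
  proof (rule relaxation_ge_lower_bound[where y = "\<lambda>s. inner a (x s)" and g = "\<lambda>s. inner a (p s)"])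
    fix s :: real assume "s \<ge> 0"
    show "((\<lambda>s. inner a (x s)) has_real_derivative c * (inner a (p s) - inner a (x s))) (at s within {0..})"
      using bounded_linear.has_vector_derivative[OF bounded_linear_inner_right deriv[OF \<open>s \<ge> 0\<close>]]
      by (simp add: has_real_derivative_iff_has_vector_derivative inner_diff_right)
    show "inner a (p s) \<ge> b" using sep(2) target[OF \<open>s \<ge> 0\<close>] by (simp add: less_imp_le)
  qed (use assms sep(2) in \<open>auto simp: less_imp_le\<close>)
  with sep(1) show False by simp
qed

lemma is_solution_mset_eq:
  assumes "mset lam = mset lam'"
  shows "is_solution lam x0 X \<longleftrightarrow> is_solution lam' x0 X"
  using kappa_mset_eq[OF assms] mset_eq_length[OF assms] by (simp add: is_solution_def)

lemma sum_kappa_eq_0_iff: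
  fixes y :: "nat \<Rightarrow> 'a::real_vector"
  shows "(\<Sum>k\<le>length lam. kappa k lam *\<^sub>R y k) = 0
    \<longleftrightarrow> y (length lam) = - (\<Sum>k<length lam. kappa k lam *\<^sub>R y k)"
  by (simp add: lessThan_Suc_atMost[symmetric] eq_neg_iff_add_eq_0 add.commute)

lemma is_solution_Cons_reduce:
  fixes X :: "nat \<Rightarrow> real \<Rightarrow> 'a::real_normed_vector"
  assumes "is_solution (m # lam) x0 X"
  shows "is_solution lam (\<lambda>k. x0 (Suc k) - m *\<^sub>R x0 k) (\<lambda>k s. X (Suc k) s - m *\<^sub>R X k s)"
  unfolding is_solution_def
proof (intro conjI allI impI)
  note sol = assms[unfolded is_solution_def]
  fix k and s :: real assume "k < length lam" "0 \<le> s"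
  with sol show "((\<lambda>s. X (Suc k) s - m *\<^sub>R X k s) has_vector_derivative
      X (Suc (Suc k)) s - m *\<^sub>R X (Suc k) s) (at s within {0..})"
    by (auto intro!: has_vector_derivative_diff
        bounded_linear.has_vector_derivative[OF bounded_linear_scaleR_right])
next
  note sol = assms[unfolded is_solution_def]
  fix s :: real assume "0 \<le> s"
  have "(\<Sum>k\<le>length lam. kappa k lam *\<^sub>R (X (Suc k) s - m *\<^sub>R X k s))
      = (\<Sum>k\<le>length (m # lam). kappa k (m # lam) *\<^sub>R X k s)"
    using sum_kappa_Cons[where i = "Suc (length lam)" and m = m and mu = lam and y = "\<lambda>k. X k s"]
    by (simp only: length_Cons lessThan_Suc_atMost kappa_beyond_length[OF lessI]
        mult_zero_right scaleR_zero_left diff_zero)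
  also have "\<dots> = 0"
    using sol \<open>0 \<le> s\<close> sum_kappa_eq_0_iff[of "m # lam" "\<lambda>k. X k s"] by simp
  finally show "X (Suc (length lam)) s - m *\<^sub>R X (length lam) s
      = - (\<Sum>k<length lam. kappa k lam *\<^sub>R (X (Suc k) s - m *\<^sub>R X k s))"
    using sum_kappa_eq_0_iff[where lam = lam and y = "\<lambda>k. X (Suc k) s - m *\<^sub>R X k s"] by simp
next
  fix k assume "k < length lam"
  with assms show "X (Suc k) 0 - m *\<^sub>R X k 0 = x0 (Suc k) - m *\<^sub>R x0 k"
    by (simp add: is_solution_def)
qed

definition kappa_vertex :: "real list \<Rightarrow> (nat \<Rightarrow> 'a::real_vector) \<Rightarrow> nat \<Rightarrow> 'a" where
  "kappa_vertex mu y i = (\<Sum>j<i. (kappa j mu / kappa 0 mu) *\<^sub>R y j)"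

lemma kappa_vertex_Cons_in_segment:
  fixes y :: "nat \<Rightarrow> 'a::real_vector"
  assumes "m < 0" and neg: "\<forall>l\<in>set mu. l < 0"
  shows "(- 1 / m) *\<^sub>R kappa_vertex mu (\<lambda>j. y (Suc j) - m *\<^sub>R y j) i
    \<in> closed_segment (kappa_vertex (m # mu) y i) (kappa_vertex (m # mu) y (Suc i))"
proof -
  let ?K = "\<lambda>j. kappa j (m # mu)" and ?v = "kappa_vertex (m # mu) y"
  have "kappa 0 mu > 0" using kappa_pos[OF neg] by simp
  then have K0: "?K 0 = - m * kappa 0 mu" "?K 0 > 0" using \<open>m < 0\<close> by (simp_all add: mult_neg_pos)
  have drift: "- m * kappa i mu \<ge> 0"
    using \<open>m < 0\<close> kappa_nonneg[OF neg] by (simp add: mult_nonpos_nonneg)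
  have Ki: "?K i \<ge> - m * kappa i mu"
    using kappa_nonneg[OF neg] by (cases i) simp_all
  \<comment> \<open>If \<open>?K i = 0\<close>, then \<open>u = 0\<close> (division by zero) and the two vertices coincide.\<close>
  define u where "u = - m * kappa i mu / ?K i"
  have u: "0 \<le> u \<and> u \<le> 1 \<and> u * ?K i = - m * kappa i mu"
  proof (cases "?K i = 0")
    case True
    then show ?thesis using drift Ki by (simp add: u_def)
  next
    case False
    then have "?K i > 0" using drift Ki by linarith
    then show ?thesis using drift Ki by (simp add: u_def field_simps)
  qed
  have "(- 1 / m) *\<^sub>R kappa_vertex mu (\<lambda>j. y (Suc j) - m *\<^sub>R y j) i
      = (1 / ?K 0) *\<^sub>R (\<Sum>j<i. kappa j mu *\<^sub>R (y (Suc j) - m *\<^sub>R y j))"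
    using K0 \<open>m < 0\<close> by (simp add: kappa_vertex_def scaleR_sum_right)
  also have "(\<Sum>j<i. kappa j mu *\<^sub>R (y (Suc j) - m *\<^sub>R y j))
      = (\<Sum>j\<le>i. ?K j *\<^sub>R y j) + (m * kappa i mu) *\<^sub>R y i"
    using sum_kappa_Cons[where i = i and m = m and mu = mu and y = y] by simp
  also have "(1 / ?K 0) *\<^sub>R ((\<Sum>j\<le>i. ?K j *\<^sub>R y j) + (m * kappa i mu) *\<^sub>R y i)
      = ?v (Suc i) + (m * kappa i mu / ?K 0) *\<^sub>R y i"
    by (simp add: kappa_vertex_def lessThan_Suc_atMost scaleR_sum_right scaleR_add_right)
  also have "\<dots> = (1 - u) *\<^sub>R ?v (Suc i) + u *\<^sub>R ?v i"
  proof -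
    define c where "c = ?K i / ?K 0"
    have "?v (Suc i) = ?v i + c *\<^sub>R y i" by (simp add: kappa_vertex_def c_def)
    moreover have "m * kappa i mu / ?K 0 = - (u * c)" using u by (simp add: c_def)
    ultimately show ?thesis by (simp add: algebra_simps)
  qed
  finally show ?thesis
    using u by (subst closed_segment_commute) (auto simp: in_segment)
qed

lemma scaled_convex_hull_kappa_vertices_Cons:
  fixes y :: "nat \<Rightarrow> 'a::real_vector"
  assumes "m < 0" and "\<forall>l\<in>set mu. l < 0"
  shows "(\<lambda>z. (- 1 / m) *\<^sub>R z) ` (convex hull (kappa_vertex mu (\<lambda>j. y (Suc j) - m *\<^sub>R y j) ` {..n}))
    \<subseteq> convex hull (kappa_vertex (m # mu) y ` {..Suc n})"
proof -
  let ?K = "convex hull (kappa_vertex (m # mu) y ` {..Suc n})"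
  have "(- 1 / m) *\<^sub>R kappa_vertex mu (\<lambda>j. y (Suc j) - m *\<^sub>R y j) i \<in> ?K" if "i \<le> n" for i
  proof -
    have "{kappa_vertex (m # mu) y i, kappa_vertex (m # mu) y (Suc i)} \<subseteq> ?K"
      using that by (auto intro!: hull_inc)
    then have "closed_segment (kappa_vertex (m # mu) y i) (kappa_vertex (m # mu) y (Suc i)) \<subseteq> ?K"
      by (simp add: segment_convex_hull hull_minimal)
    with kappa_vertex_Cons_in_segment[OF assms] show ?thesis by blast
  qed
  then have "convex hull ((\<lambda>z. (- 1 / m) *\<^sub>R z) ` kappa_vertex mu (\<lambda>j. y (Suc j) - m *\<^sub>R y j) ` {..n}) \<subseteq> ?K"
    by (intro hull_minimal) auto
  then show ?thesis by (simp only: convex_hull_scaling)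
qed

lemma solution_in_convex_hull_kappa_vertices:
  fixes X :: "nat \<Rightarrow> real \<Rightarrow> 'a::{real_inner,heine_borel}"
  assumes "\<forall>l\<in>set (mu @ [a]). l < 0" and "is_solution (mu @ [a]) x0 X" and "t \<ge> 0"
  shows "X 0 t \<in> convex hull (kappa_vertex mu x0 ` {..Suc (length mu)})"
  using assms
proof (induction mu arbitrary: x0 X t)
  case Nil
  have sol: "X 0 0 = x0 0"
    "\<And>s. s \<ge> 0 \<Longrightarrow> (X 0 has_vector_derivative (- a) *\<^sub>R (0 - X 0 s)) (at s within {0..})"
    using Nil.prems(2) by (auto simp: is_solution_def)
  have vertices: "kappa_vertex [] x0 ` {..Suc 0} = {0, x0 0}"
    by (auto simp: kappa_vertex_def atMost_Suc)
  have "X 0 t \<in> convex hull {0, x0 0}"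
  proof (rule relaxation_stays_in_closed_convex[where c = "- a" and p = "\<lambda>_. 0"])
    show "closed (convex hull {0, x0 0})"
      by (simp add: compact_imp_closed finite_imp_compact_convex_hull)
  qed (use Nil.prems sol in \<open>auto simp: hull_inc\<close>)
  then show ?case by (simp only: vertices list.size)
next
  case (Cons m mu)
  let ?w0 = "\<lambda>k. x0 (Suc k) - m *\<^sub>R x0 k" and ?W = "\<lambda>k s. X (Suc k) s - m *\<^sub>R X k s"
  let ?K = "convex hull (kappa_vertex (m # mu) x0 ` {..Suc (length (m # mu))})"
  have m: "m < 0" and neg: "\<forall>l\<in>set mu. l < 0"
    using Cons.prems(1) by auto
  have "is_solution (mu @ [a]) ?w0 ?W"
    using is_solution_Cons_reduce Cons.prems(2) by fastforce
  then have IH: "?W 0 s \<in> convex hull (kappa_vertex mu ?w0 ` {..Suc (length mu)})" if "s \<ge> 0" for s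
    using Cons.IH Cons.prems(1) that by simp
  have scaled: "(- 1 / m) *\<^sub>R z \<in> ?K" if "z \<in> convex hull (kappa_vertex mu ?w0 ` {..Suc (length mu)})" for z
    using scaled_convex_hull_kappa_vertices_Cons[OF m neg, of x0 "Suc (length mu)"] that by auto
  have "X 0 0 = kappa_vertex (m # mu) x0 (Suc 0)"
    using Cons.prems(2) kappa_pos[OF neg, of 0] m by (simp add: is_solution_def kappa_vertex_def)
  then have start: "X 0 0 \<in> ?K" by (auto intro!: hull_inc)
  have "(X 0 has_vector_derivative X 1 s) (at s within {0..})" if "s \<ge> 0" for s
    using Cons.prems(2) that by (simp add: is_solution_def)
  moreover have "X 1 s = (- m) *\<^sub>R ((- 1 / m) *\<^sub>R ?W 0 s - X 0 s)" for s
    using m by (simp add: algebra_simps)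
  ultimately have deriv: "(X 0 has_vector_derivative (- m) *\<^sub>R ((- 1 / m) *\<^sub>R ?W 0 s - X 0 s))
      (at s within {0..})" if "s \<ge> 0" for s
    using that by simp
  show ?case
  proof (rule relaxation_stays_in_closed_convex[where c = "- m" and K = ?K, OF _ _ _ start _ deriv])
    show "closed ?K" by (simp add: compact_imp_closed finite_imp_compact_convex_hull)
  qed (use m scaled IH Cons.prems(3) in auto)
qed

theorem theorem1:
  fixes lam :: "real list" and x0 :: "nat \<Rightarrow> real ^ 'm" and X :: "nat \<Rightarrow> real \<Rightarrow> real ^ 'm"
  assumes "length lam \<ge> 1"
    and "\<forall>l\<in>set lam. l < 0"
    and "is_solution lam x0 X"
    and "t \<ge> 0"
  shows "X 0 t \<in> convex hull
    {\<Sum>j<i. (kappa j (remove1 (Max (set lam)) lam) / kappa 0 (remove1 (Max (set lam)) lam)) *\<^sub>R x0 j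
      | i. i \<le> length lam}"
proof -
  define mu where "mu = remove1 (Max (set lam)) lam"
  have "Max (set lam) \<in> set lam" using assms(1) by (intro Max_in) auto
  then have perm: "mset lam = mset (mu @ [Max (set lam)])" by (simp add: mu_def)
  then have "length lam = Suc (length mu)" by (simp flip: size_mset)
  moreover have "X 0 t \<in> convex hull (kappa_vertex mu x0 ` {..Suc (length mu)})"
    using assms(2-4) is_solution_mset_eq[OF perm] arg_cong[OF perm, of set_mset]
    by (intro solution_in_convex_hull_kappa_vertices) auto
  ultimately show ?thesis
    unfolding mu_def[symmetric] kappa_vertex_def by (simp add: setcompr_eq_image atMost_def)
qed

end
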